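(* Let $\mathcal{M}$ be a matroid with set of bases $\mathcal{B}$ and let $d\geq 2$. If $\mathcal{M}$ has a minor $\mathcal{M}'$ isomorphic to the uniform matroid $\mathcal{U}_{d,2d}$, then there exist $B_1,B_2\in\mathcal{B}$ such that $\Delta_{\{B_1,B_2\}}=\binom{2d-1}{d}$.
   Context: $\mathcal{U}_{r,n}$ denotes the uniform matroid of rank $r$ on $n$ elements. A minor of $\mathcal{M}$ is a matroid $(\mathcal{M}\setminus A)/C$ with $A,C$ disjoint subsets of the ground set. For bases $B_1,B_2$ of $\mathcal{M}$, $\Delta_{\{B_1,B_2\}}$ is the number of unordered pairs $\{D_1,D_2\}$ with $D_1,D_2\in\mathcal{B}$ such that $D_1\cup D_2=B_1\cup B_2$ as multisets. *)

theory Defs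
  imports Main "HOL-Library.Multiset"
begin

definition matroid :: "'a set \<Rightarrow> 'a set set \<Rightarrow> bool" where
  "matroid E BB \<longleftrightarrow> finite E \<and> BB \<noteq> {} \<and> (\<forall>B\<in>BB. B \<subseteq> E) \<and>
     (\<forall>B1\<in>BB. \<forall>B2\<in>BB. \<forall>x\<in>B1 - B2. \<exists>y\<in>B2 - B1. insert y (B1 - {x}) \<in> BB)"

definition indep :: "'a set set \<Rightarrow> 'a set \<Rightarrow> bool" where
  "indep BB X \<longleftrightarrow> (\<exists>B\<in>BB. X \<subseteq> B)"

definition restrict_bases :: "'a set set \<Rightarrow> 'a set \<Rightarrow> 'a set set" where
  "restrict_bases BB S = {X. X \<subseteq> S \<and> indep BB X \<and> (\<forall>Y. X \<subset> Y \<and> Y \<subseteq> S \<longrightarrow> \<not> indep BB Y)}"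

definition delete_bases :: "'a set \<Rightarrow> 'a set set \<Rightarrow> 'a set \<Rightarrow> 'a set set" where
  "delete_bases E BB A = restrict_bases BB (E - A)"

definition contract_bases :: "'a set set \<Rightarrow> 'a set \<Rightarrow> 'a set set" where
  "contract_bases BB C = {B - C | B. B \<in> BB \<and> B \<inter> C \<in> restrict_bases BB C}"

text \<open>Bases of the minor (M \ A) / C; its ground set is E - A - C.\<close>
definition minor_bases :: "'a set \<Rightarrow> 'a set set \<Rightarrow> 'a set \<Rightarrow> 'a set \<Rightarrow> 'a set set" where
  "minor_bases E BB A C = contract_bases (delete_bases E BB A) C"

definition uniform_bases :: "nat \<Rightarrow> nat \<Rightarrow> nat set set" where
  "uniform_bases r n = {X. X \<subseteq> {0..<n} \<and> card X = r}"

definition matroid_iso :: "'a set \<Rightarrow> 'a set set \<Rightarrow> 'b set \<Rightarrow> 'b set set \<Rightarrow> bool" where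
  "matroid_iso E BB E' BB' \<longleftrightarrow>
     (\<exists>f. bij_betw f E E' \<and> (\<forall>X. X \<subseteq> E \<longrightarrow> (X \<in> BB \<longleftrightarrow> f ` X \<in> BB')))"

definition Delta :: "'a set set \<Rightarrow> 'a set \<Rightarrow> 'a set \<Rightarrow> nat" where
  "Delta BB B1 B2 = card {{#D1, D2#} | D1 D2. D1 \<in> BB \<and> D2 \<in> BB \<and>
       mset_set D1 + mset_set D2 = mset_set B1 + mset_set B2}"

end

theory Submission
  imports Defs
begin

text \<open>
  Contracting C and deleting A can be undone on the level of bases: there is a fixed set S,
  disjoint from the ground set G of the minor, such that S \<union> P is a basis of M for every basis P
  of the minor. For the minor U_{d,2d} this gives bases S \<union> P for all d-subsets P of G, and
  all of them have cardinality |S| + d. Take B1 = S \<union> P0 and B2 = S \<union> (G - P0). A pair of bases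
  whose multiset union is 2S + G must then be {S \<union> P, S \<union> (G - P)} with |P| = d, and
  P and G - P give the same pair. Hence Delta is half the number of d-subsets of a 2d-set,
  i.e. binomial(2d-1, d).
\<close>

lemma matroid_finite: "matroid E BB \<Longrightarrow> finite E"
  by (simp add: matroid_def)

lemma matroid_basis_subset: "matroid E BB \<Longrightarrow> B \<in> BB \<Longrightarrow> B \<subseteq> E"
  by (auto simp: matroid_def)

lemma matroid_basis_finite: "matroid E BB \<Longrightarrow> B \<in> BB \<Longrightarrow> finite B"
  using matroid_finite matroid_basis_subset finite_subset by metis

lemma matroid_exchange:
  "matroid E BB \<Longrightarrow> B1 \<in> BB \<Longrightarrow> B2 \<in> BB \<Longrightarrow> x \<in> B1 - B2 \<Longrightarrow>
   \<exists>y\<in>B2 - B1. insert y (B1 - {x}) \<in> BB"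
  by (simp add: matroid_def)

lemma indep_subset: "matroid E BB \<Longrightarrow> indep BB X \<Longrightarrow> X \<subseteq> E"
  by (auto simp: indep_def matroid_def)

lemma indep_finite: "matroid E BB \<Longrightarrow> indep BB X \<Longrightarrow> finite X"
  using indep_subset matroid_finite finite_subset by metis

lemma indep_mono: "indep BB X \<Longrightarrow> Y \<subseteq> X \<Longrightarrow> indep BB Y"
  by (auto simp: indep_def)

lemma basis_indep: "B \<in> BB \<Longrightarrow> indep BB B"
  by (auto simp: indep_def)

lemma matroid_bases_card_le:
  assumes M: "matroid E BB" and B1: "B1 \<in> BB" and B2: "B2 \<in> BB"
  shows "card B2 \<le> card B1"
  using B2
proof (induction "card (B2 - B1)" arbitrary: B2)
  case 0
  then have "B2 \<subseteq> B1"
    using matroid_basis_finite[OF M] by auto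
  then show ?case
    using card_mono matroid_basis_finite[OF M B1] by blast
next
  case (Suc n)
  have fin: "finite B2" using Suc.prems matroid_basis_finite[OF M] by blast
  obtain x where x: "x \<in> B2 - B1"
    using Suc.hyps(2) by (metis card.empty ex_in_conv nat.distinct(1))
  obtain y where y: "y \<in> B1 - B2" "insert y (B2 - {x}) \<in> BB"
    using matroid_exchange[OF M Suc.prems B1 x] by blast
  have "insert y (B2 - {x}) - B1 = (B2 - B1) - {x}"
    using x y by auto
  then have "card (insert y (B2 - {x}) - B1) = n"
    using Suc.hyps(2) x fin by simp
  then have "card (insert y (B2 - {x})) \<le> card B1"
    using Suc.hyps(1) y(2) by blast
  moreover have "card (insert y (B2 - {x})) = card B2"
    using x y fin card_Suc_Diff1[of B2 x] by simp
  ultimately show ?case by simp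
qed

lemma matroid_bases_card_eq:
  "matroid E BB \<Longrightarrow> B1 \<in> BB \<Longrightarrow> B2 \<in> BB \<Longrightarrow> card B1 = card B2"
  using matroid_bases_card_le le_antisym by metis

lemma matroid_bases_card_Diff_eq:
  assumes M: "matroid E BB" and "B1 \<in> BB" "B2 \<in> BB"
  shows "card (B1 - B2) = card (B2 - B1)"
proof -
  have "card B1 = card (B1 \<inter> B2) + card (B1 - B2)" "card B2 = card (B2 \<inter> B1) + card (B2 - B1)"
    using assms matroid_basis_finite card_Int_Diff by metis+
  then show ?thesis
    using matroid_bases_card_eq[OF assms] by (simp add: Int_commute)
qed

text \<open>Exchanging elements outside I \<union> B1 moves a basis containing I towards B1 while keeping I.\<close>

lemma matroid_basis_towards:
  assumes M: "matroid E BB" and B1: "B1 \<in> BB" and B2: "B2 \<in> BB" and I: "I \<subseteq> B2"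
  shows "\<exists>B\<in>BB. I \<subseteq> B \<and> B - B1 \<subseteq> I"
  using B2 I
proof (induction "card (B2 - (I \<union> B1))" arbitrary: B2)
  case 0
  then have "B2 - B1 \<subseteq> I"
    using matroid_basis_finite[OF M] by auto
  then show ?case using 0 by blast
next
  case (Suc n)
  have fin: "finite B2" using Suc.prems matroid_basis_finite[OF M] by blast
  obtain x where x: "x \<in> B2 - (I \<union> B1)"
    using Suc.hyps(2) by (metis card.empty ex_in_conv nat.distinct(1))
  obtain y where y: "y \<in> B1 - B2" "insert y (B2 - {x}) \<in> BB"
    using matroid_exchange[OF M Suc.prems(1) B1] x by blast
  have "insert y (B2 - {x}) - (I \<union> B1) = (B2 - (I \<union> B1)) - {x}"
    using x y by auto
  then have "card (insert y (B2 - {x}) - (I \<union> B1)) = n"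
    using Suc.hyps(2) x fin by simp
  moreover have "I \<subseteq> insert y (B2 - {x})"
    using Suc.prems(2) x by blast
  ultimately show ?case
    using Suc.hyps(1) y(2) by blast
qed

lemma matroid_indep_augment:
  assumes M: "matroid E BB" and I1: "indep BB I1" and I2: "indep BB I2"
    and less: "card I1 < card I2"
  shows "\<exists>x\<in>I2 - I1. indep BB (insert x I1)"
proof (rule ccontr)
  assume no_aug: "\<not> ?thesis"
  obtain B1 where B1: "B1 \<in> BB" "I1 \<subseteq> B1"
    using I1 unfolding indep_def by auto
  obtain B2 where B2: "B2 \<in> BB" "I2 \<subseteq> B2" "B2 - B1 \<subseteq> I2"
    using I2 matroid_basis_towards[OF M B1(1)] unfolding indep_def by blast
  have sub1: "B1 - B2 \<subseteq> I1"
  proof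
    fix x assume x: "x \<in> B1 - B2"
    obtain y where y: "y \<in> B2 - B1" "insert y (B1 - {x}) \<in> BB"
      using matroid_exchange[OF M B1(1) B2(1) x] by blast
    have "y \<in> I2 - I1" using y(1) B2(3) B1(2) by auto
    then have "\<not> indep BB (insert y I1)" using no_aug by blast
    then have "\<not> insert y I1 \<subseteq> insert y (B1 - {x})"
      using indep_mono[OF basis_indep[OF y(2)]] by blast
    then show "x \<in> I1" using B1(2) by auto
  qed
  have sub2: "I2 - I1 \<subseteq> B2 - B1"
  proof
    fix y assume y: "y \<in> I2 - I1"
    then have "\<not> insert y I1 \<subseteq> B1"
      using no_aug indep_mono[OF basis_indep[OF B1(1)]] by blast
    then show "y \<in> B2 - B1" using y B1(2) B2(2) by blast
  qed
  have "card (I2 - I1) \<le> card (B2 - B1)"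
    using sub2 matroid_basis_finite[OF M B2(1)] by (simp add: card_mono)
  also have "\<dots> = card (B1 - B2)"
    using matroid_bases_card_Diff_eq[OF M B1(1) B2(1)] by simp
  also have "\<dots> \<le> card (I1 - I2)"
    using sub1 B2(2) indep_finite[OF M I1] by (intro card_mono) auto
  finally have "card (I2 - I1) \<le> card (I1 - I2)" .
  moreover have "card I1 = card (I1 \<inter> I2) + card (I1 - I2)"
    "card I2 = card (I2 \<inter> I1) + card (I2 - I1)"
    using indep_finite[OF M] I1 I2 card_Int_Diff by metis+
  ultimately show False
    using less by (simp add: Int_commute)
qed

lemma matroid_indep_grow:
  assumes M: "matroid E BB" and Y: "indep BB Y" and J: "indep BB J"
  shows "\<exists>L. indep BB L \<and> J \<subseteq> L \<and> L \<subseteq> J \<union> Y \<and> card Y \<le> card L"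
  using J
proof (induction "card Y - card J" arbitrary: J rule: less_induct)
  case less
  show ?case
  proof (cases "card Y \<le> card J")
    case True
    then show ?thesis using less.prems by blast
  next
    case False
    then obtain x where x: "x \<in> Y - J" "indep BB (insert x J)"
      using matroid_indep_augment[OF M less.prems Y] by auto
    have "card (insert x J) = Suc (card J)"
      using x(1) indep_finite[OF M less.prems] by simp
    then have "card Y - card (insert x J) < card Y - card J"
      using False by simp
    then show ?thesis
      using less.hyps[OF _ x(2)] x(1) by blast
  qed
qed

lemma matroid_indep_basis_card:
  assumes M: "matroid E BB" and L: "indep BB L" and B0: "B0 \<in> BB"
    and card_le: "card B0 \<le> card L"
  shows "L \<in> BB"
proof -
  obtain B where B: "B \<in> BB" "L \<subseteq> B"
    using L unfolding indep_def by blast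
  have "card B \<le> card L"
    using matroid_bases_card_eq[OF M B(1) B0] card_le by simp
  then have "L = B"
    using card_seteq[OF matroid_basis_finite[OF M B(1)] B(2)] by simp
  then show ?thesis using B(1) by simp
qed

lemma restrict_basis_exists:
  assumes M: "matroid E BB" and S: "finite S" and Y: "indep BB Y" "Y \<subseteq> S"
  shows "\<exists>X. Y \<subseteq> X \<and> X \<in> restrict_bases BB S"
  using Y
proof (induction "card S - card Y" arbitrary: Y rule: less_induct)
  case less
  show ?case
  proof (cases "\<exists>Z. Y \<subset> Z \<and> Z \<subseteq> S \<and> indep BB Z")
    case False
    then show ?thesis using less.prems unfolding restrict_bases_def by blast
  next
    case True
    then obtain Z where Z: "Y \<subset> Z" "Z \<subseteq> S" "indep BB Z" by blast
    have "card Y < card Z"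
      using psubset_card_mono[OF finite_subset[OF Z(2) S] Z(1)] .
    moreover have "card Z \<le> card S"
      using card_mono[OF S Z(2)] .
    ultimately have "card S - card Z < card S - card Y" by linarith
    then obtain X where "Z \<subseteq> X" "X \<in> restrict_bases BB S"
      using less.hyps Z(2,3) by blast
    then show ?thesis using Z(1) by blast
  qed
qed

lemma restrict_basis_card_ge:
  assumes M: "matroid E BB" and X: "X \<in> restrict_bases BB S" and Y: "Y \<subseteq> S" "indep BB Y"
  shows "card Y \<le> card X"
proof (rule ccontr)
  assume "\<not> ?thesis"
  moreover have X_max: "X \<subseteq> S" "indep BB X" "\<forall>Z. X \<subset> Z \<and> Z \<subseteq> S \<longrightarrow> \<not> indep BB Z"
    using X unfolding restrict_bases_def by auto
  ultimately obtain y where "y \<in> Y - X" "indep BB (insert y X)"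
    using matroid_indep_augment[OF M X_max(2) Y(2)] by auto
  then show False
    using X_max Y(1) by blast
qed

lemma restrict_bases_card_eq:
  assumes M: "matroid E BB" and X: "X \<in> restrict_bases BB S" and Y: "Y \<in> restrict_bases BB S"
  shows "card X = card Y"
proof -
  have "X \<subseteq> S" "indep BB X" "Y \<subseteq> S" "indep BB Y"
    using X Y unfolding restrict_bases_def by auto
  then show ?thesis
    using restrict_basis_card_ge[OF M X] restrict_basis_card_ge[OF M Y] by (simp add: le_antisym)
qed

lemma restrict_basisI:
  assumes M: "matroid E BB" and X: "X \<subseteq> S" "indep BB X"
    and max_card: "\<And>Y. Y \<subseteq> S \<Longrightarrow> indep BB Y \<Longrightarrow> card Y \<le> card X"
  shows "X \<in> restrict_bases BB S"
proof -
  have "\<not> indep BB Y" if Y: "X \<subset> Y" "Y \<subseteq> S" for Y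
  proof
    assume indep: "indep BB Y"
    have "card X < card Y"
      using psubset_card_mono[OF indep_finite[OF M indep] Y(1)] .
    then show False
      using max_card[OF Y(2) indep] by simp
  qed
  then show ?thesis
    using X unfolding restrict_bases_def by blast
qed

lemma matroid_restrict_bases:
  assumes M: "matroid E BB" and S: "S \<subseteq> E"
  shows "matroid S (restrict_bases BB S)"
proof -
  have finS: "finite S" using matroid_finite[OF M] S finite_subset by blast
  have "indep BB {}" using M unfolding matroid_def indep_def by blast
  then have nonempty: "restrict_bases BB S \<noteq> {}"
    using restrict_basis_exists[OF M finS] by blast
  have exchange: "\<exists>y\<in>B2 - B1. insert y (B1 - {x}) \<in> restrict_bases BB S"
    if B1: "B1 \<in> restrict_bases BB S" and B2: "B2 \<in> restrict_bases BB S" and x: "x \<in> B1 - B2"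
    for B1 B2 x
  proof -
    have R: "B1 \<subseteq> S" "indep BB B1" "B2 \<subseteq> S" "indep BB B2"
      using B1 B2 unfolding restrict_bases_def by auto
    have fin: "finite B1" using indep_finite[OF M R(2)] .
    have card_B1: "Suc (card (B1 - {x})) = card B1"
      using card_Suc_Diff1[OF fin] x by blast
    then have "card (B1 - {x}) < card B2"
      using restrict_bases_card_eq[OF M B1 B2] by simp
    then obtain y where y: "y \<in> B2 - (B1 - {x})" "indep BB (insert y (B1 - {x}))"
      using matroid_indep_augment[OF M indep_mono[OF R(2)] R(4)] by blast
    have "card (insert y (B1 - {x})) = card B1"
      using card_B1 fin y(1) by simp
    then have "insert y (B1 - {x}) \<in> restrict_bases BB S"
      using restrict_basisI[OF M _ y(2)] restrict_basis_card_ge[OF M B1] R(1,3) y(1) x by auto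
    moreover have "y \<in> B2 - B1" using x y(1) by auto
    ultimately show ?thesis by blast
  qed
  have "B \<subseteq> S" if "B \<in> restrict_bases BB S" for B
    using that unfolding restrict_bases_def by blast
  then show ?thesis
    using finS nonempty exchange unfolding matroid_def by blast
qed

subsection \<open>Lifting bases of a minor\<close>

lemma restrict_basis_Int:
  assumes X: "X \<in> restrict_bases BB S" and L: "indep BB L" "X \<subseteq> L"
  shows "L \<inter> S = X"
proof -
  have X_max: "X \<subseteq> S" "\<forall>Y. X \<subset> Y \<and> Y \<subseteq> S \<longrightarrow> \<not> indep BB Y"
    using X unfolding restrict_bases_def by auto
  have "z \<in> X" if "z \<in> L \<inter> S" for z
  proof -
    have "indep BB (insert z X)" "insert z X \<subseteq> S"
      using indep_mono[OF L(1)] L(2) X_max(1) that by auto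
    then show ?thesis using X_max(2) by blast
  qed
  then show ?thesis using X_max(1) L(2) by blast
qed

lemma contract_basis_lift:
  assumes M: "matroid E BB" and I: "I \<in> restrict_bases BB C" and P: "P \<in> contract_bases BB C"
  shows "I \<union> P \<in> BB"
proof -
  obtain X where X: "P = X - C" "X \<in> BB" "X \<inter> C \<in> restrict_bases BB C"
    using P unfolding contract_bases_def by blast
  have I_indep: "indep BB I"
    using I unfolding restrict_bases_def by blast
  obtain L where L: "indep BB L" "I \<subseteq> L" "L \<subseteq> I \<union> X" "card X \<le> card L"
    using matroid_indep_grow[OF M basis_indep[OF X(2)] I_indep] by blast
  have L_sub: "L \<subseteq> I \<union> P"
    using restrict_basis_Int[OF I L(1,2)] L(3) X(1) by blast
  have finX: "finite X" using matroid_basis_finite[OF M X(2)] .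
  have "card (I \<union> P) \<le> card (X \<inter> C) + card (X - C)"
    using card_Un_le[of I P] restrict_bases_card_eq[OF M I X(3)] X(1) by simp
  also have "\<dots> = card X" using card_Int_Diff[OF finX] by simp
  finally have "card (I \<union> P) \<le> card L" using L(4) by simp
  moreover have "finite (I \<union> P)"
    using indep_finite[OF M I_indep] finX X(1) by simp
  ultimately have "L = I \<union> P"
    using card_seteq[OF _ L_sub] by simp
  then show ?thesis
    using matroid_indep_basis_card[OF M L(1) X(2) L(4)] by simp
qed

lemma restrict_bases_lift:
  assumes M: "matroid E BB" and S: "S \<subseteq> E"
  obtains K where "K \<subseteq> E - S" "\<And>J. J \<in> restrict_bases BB S \<Longrightarrow> J \<union> K \<in> BB"
proof -
  obtain J0 where J0: "J0 \<in> restrict_bases BB S"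
    using matroid_restrict_bases[OF M S] unfolding matroid_def by blast
  have J0_sub: "J0 \<subseteq> S" "indep BB J0"
    using J0 unfolding restrict_bases_def by auto
  obtain B0 where B0: "B0 \<in> BB" "J0 \<subseteq> B0"
    using J0_sub(2) unfolding indep_def by blast
  have finB0: "finite B0" using matroid_basis_finite[OF M B0(1)] .
  define K where "K = B0 - J0"
  have "K \<subseteq> E - S"
    using restrict_basis_Int[OF J0 basis_indep[OF B0(1)] B0(2)] matroid_basis_subset[OF M B0(1)]
    unfolding K_def by blast
  moreover have "J \<union> K \<in> BB" if J: "J \<in> restrict_bases BB S" for J
  proof -
    have J_indep: "indep BB J" "J \<subseteq> S"
      using J unfolding restrict_bases_def by auto
    obtain L where L: "indep BB L" "J \<subseteq> L" "L \<subseteq> J \<union> B0" "card B0 \<le> card L"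
      using matroid_indep_grow[OF M basis_indep[OF B0(1)] J_indep(1)] by blast
    have L_sub: "L \<subseteq> J \<union> K"
      using restrict_basis_Int[OF J L(1,2)] L(3) J0_sub(1) unfolding K_def by blast
    have "card (J \<union> K) \<le> card J0 + card (B0 - J0)"
      using card_Un_le[of J K] restrict_bases_card_eq[OF M J J0] unfolding K_def by simp
    also have "\<dots> = card B0"
      using card_Diff_subset[OF finite_subset[OF B0(2) finB0] B0(2)] card_mono[OF finB0 B0(2)] by simp
    finally have "card (J \<union> K) \<le> card L" using L(4) by simp
    moreover have "finite (J \<union> K)"
      using indep_finite[OF M J_indep(1)] finB0 unfolding K_def by simp
    ultimately have "L = J \<union> K"
      using card_seteq[OF _ L_sub] by simp
    then show ?thesis
      using matroid_indep_basis_card[OF M L(1) B0(1) L(4)] by simp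
  qed
  ultimately show ?thesis using that by blast
qed

lemma minor_bases_lift:
  assumes M: "matroid E BB" and A: "A \<subseteq> E" and C: "C \<subseteq> E"
  obtains T where "T \<subseteq> E" "T \<inter> (E - A - C) = {}" "\<And>P. P \<in> minor_bases E BB A C \<Longrightarrow> T \<union> P \<in> BB"
proof -
  let ?BB' = "delete_bases E BB A"
  have M': "matroid (E - A) ?BB'"
    unfolding delete_bases_def using matroid_restrict_bases[OF M] by blast
  obtain K where K: "K \<subseteq> E - (E - A)" "\<And>J. J \<in> ?BB' \<Longrightarrow> J \<union> K \<in> BB"
    using restrict_bases_lift[OF M, of "E - A"] unfolding delete_bases_def by blast
  have "indep ?BB' {}" using M' unfolding matroid_def indep_def by blast
  then obtain I where I: "I \<in> restrict_bases ?BB' C"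
    using restrict_basis_exists[OF M' finite_subset[OF C matroid_finite[OF M]]] by blast
  have "I \<subseteq> C" using I unfolding restrict_bases_def by blast
  then have "I \<union> K \<subseteq> E" "(I \<union> K) \<inter> (E - A - C) = {}" using K(1) C by auto
  moreover have "(I \<union> K) \<union> P \<in> BB" if "P \<in> minor_bases E BB A C" for P
  proof -
    have "(I \<union> P) \<union> K \<in> BB"
      using K(2)[OF contract_basis_lift[OF M' I]] that unfolding minor_bases_def by blast
    then show ?thesis by (simp add: Un_ac)
  qed
  ultimately show ?thesis using that by blast
qed

lemma matroid_iso_uniform_bases:
  assumes "matroid_iso G MB {0..<n} (uniform_bases r n)"
  shows "card G = n" "\<And>X. X \<subseteq> G \<Longrightarrow> X \<in> MB \<longleftrightarrow> card X = r"
proof -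
  obtain f where f: "bij_betw f G {0..<n}"
    and MB: "\<And>X. X \<subseteq> G \<Longrightarrow> X \<in> MB \<longleftrightarrow> f ` X \<in> uniform_bases r n"
    using assms unfolding matroid_iso_def by blast
  show "card G = n" using bij_betw_same_card[OF f] by simp
  fix X assume X: "X \<subseteq> G"
  have "f ` X \<subseteq> {0..<n}" using X bij_betw_imp_surj_on[OF f] by blast
  moreover have "card (f ` X) = card X"
    using card_image inj_on_subset[OF bij_betw_imp_inj_on[OF f] X] by blast
  ultimately show "X \<in> MB \<longleftrightarrow> card X = r"
    using MB[OF X] unfolding uniform_bases_def by simp
qed

subsection \<open>Counting complementary pairs\<close>

lemma mset_set_Un_complement:
  assumes "finite S" "finite G" "S \<inter> G = {}" "P \<subseteq> G"
  shows "mset_set (S \<union> P) + mset_set (S \<union> (G - P)) = mset_set S + mset_set S + mset_set G"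
proof -
  have fin: "finite P" "finite (G - P)" using assms finite_subset by auto
  have "mset_set (S \<union> P) = mset_set S + mset_set P"
    "mset_set (S \<union> (G - P)) = mset_set S + mset_set (G - P)"
    using assms fin by (auto intro: mset_set_Union)
  moreover have "mset_set G = mset_set P + mset_set (G - P)"
    using mset_set_Union[of P "G - P"] fin assms(4) by (simp add: Un_absorb1)
  ultimately show ?thesis by (simp add: ac_simps)
qed

lemma mset_set_sum_eq_Un_complement:
  assumes S: "finite S" and G: "finite G" and SG: "S \<inter> G = {}"
    and D: "finite D1" "finite D2"
    and sum: "mset_set D1 + mset_set D2 = mset_set S + mset_set S + mset_set G"
  shows "D1 = S \<union> (D1 \<inter> G)" "D2 = S \<union> (G - D1 \<inter> G)"
proof -
  have cnt: "(if x \<in> D1 then 1 else 0) + (if x \<in> D2 then 1 else (0::nat)) =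
      (if x \<in> S then 2 else 0) + (if x \<in> G then 1 else 0)" for x
    using arg_cong[OF sum, of "\<lambda>M. count M x"] D S G by (simp add: count_mset_set')
  have in_S: "x \<in> D1 \<and> x \<in> D2" if "x \<in> S" for x
    using cnt[of x] that SG by (auto split: if_splits)
  have in_G: "x \<in> D1 \<longleftrightarrow> x \<notin> D2" if "x \<in> G" for x
    using cnt[of x] that SG by (auto split: if_splits)
  have outside: "x \<notin> D1 \<and> x \<notin> D2" if "x \<notin> S" "x \<notin> G" for x
    using cnt[of x] that by (auto split: if_splits)
  show "D1 = S \<union> (D1 \<inter> G)"
    using in_S outside by blast
  show "D2 = S \<union> (G - D1 \<inter> G)"
    using in_S in_G outside by blast
qed

lemma card_complement_half:
  assumes "finite G" "card G = 2 * d" "P \<subseteq> G" "card P = d"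
  shows "card (G - P) = d"
  using card_Diff_subset[OF finite_subset[OF assms(3,1)] assms(3)] assms(2,4) by simp

lemma add_mset_pair_eq_iff:
  "{#a, b#} = {#c, d#} \<longleftrightarrow> (a = c \<and> b = d) \<or> (a = d \<and> b = c)"
  by (auto simp: add_eq_conv_ex)

text \<open>P and G - P give the same pair; normalising to the member containing a fixed g \<in> G halves the count.\<close>

lemma card_complement_pairs:
  assumes G: "finite G" "card G = 2 * d" and d: "d \<ge> 1" and SG: "S \<inter> G = {}"
  shows "card ((\<lambda>P. {#S \<union> P, S \<union> (G - P)#}) ` {P. P \<subseteq> G \<and> card P = d}) = (2 * d - 1) choose d"
proof -
  define h where "h = (\<lambda>P. {#S \<union> P, S \<union> (G - P)#})"
  obtain g where g: "g \<in> G" using G d by fastforce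
  define fam where "fam = {P. P \<subseteq> G \<and> card P = d \<and> g \<in> P}"
  define sub where "sub = {R. R \<subseteq> G - {g} \<and> card R = d - 1}"
  have "h P \<in> h ` fam" if P: "P \<subseteq> G" "card P = d" for P
  proof (cases "g \<in> P")
    case True
    then show ?thesis using P unfolding fam_def by blast
  next
    case False
    have "G - (G - P) = P" using P(1) by blast
    then have "h P = h (G - P)"
      unfolding h_def by (simp add: add_mset_commute)
    moreover have "G - P \<in> fam"
      using False g card_complement_half[OF G P] unfolding fam_def by blast
    ultimately show ?thesis by simp
  qed
  then have image_eq: "h ` {P. P \<subseteq> G \<and> card P = d} = h ` fam"
    unfolding fam_def by blast
  have trace: "(S \<union> P) \<inter> G = P" if "P \<subseteq> G" for P
    using that SG by blast
  have "inj_on h fam"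
  proof
    fix P P' assume P: "P \<in> fam" "P' \<in> fam" and "h P = h P'"
    then have "S \<union> P = S \<union> P' \<or> S \<union> P = S \<union> (G - P')"
      unfolding h_def add_mset_pair_eq_iff by blast
    moreover have "P \<subseteq> G" "P' \<subseteq> G" "g \<in> P" "g \<in> P'"
      using P unfolding fam_def by auto
    ultimately have "P = P' \<or> P = G - P'"
      using trace[of P] trace[of P'] trace[of "G - P'"] by (metis Diff_subset)
    then show "P = P'" using \<open>g \<in> P\<close> \<open>g \<in> P'\<close> by blast
  qed
  moreover have "fam = insert g ` sub"
  proof (intro set_eqI iffI)
    fix P assume P: "P \<in> fam"
    then have "finite P" using G(1) finite_subset unfolding fam_def by blast
    then have "P - {g} \<in> sub"
      using P unfolding fam_def sub_def by auto
    moreover have "P = insert g (P - {g})" using P unfolding fam_def by blast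
    ultimately show "P \<in> insert g ` sub" by blast
  next
    fix P assume "P \<in> insert g ` sub"
    then obtain R where R: "R \<subseteq> G - {g}" "card R = d - 1" "P = insert g R"
      unfolding sub_def by blast
    have "finite R" "g \<notin> R" using R(1) G(1) finite_subset by auto
    then have "card P = d" using R d by simp
    then show "P \<in> fam"
      using R g unfolding fam_def by blast
  qed
  moreover have "inj_on (insert g) sub"
    unfolding sub_def inj_on_def by blast
  moreover have "card sub = (2 * d - 1) choose (d - 1)"
    using n_subsets[of "G - {g}" "d - 1"] G g unfolding sub_def by simp
  ultimately have "card (h ` fam) = (2 * d - 1) choose (d - 1)"
    using card_image by metis
  also have "\<dots> = (2 * d - 1) choose d"
    using binomial_symmetric[of "d - 1" "2 * d - 1"] d by (simp add: diff_diff_left)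
  finally show ?thesis using image_eq unfolding h_def by simp
qed

lemma Delta_Un_complement:
  assumes M: "matroid E BB" and S: "finite S" and G: "finite G" "card G = 2 * d"
    and d: "d \<ge> 1" and SG: "S \<inter> G = {}"
    and bases: "\<And>P. P \<subseteq> G \<Longrightarrow> card P = d \<Longrightarrow> S \<union> P \<in> BB"
    and P0: "P0 \<subseteq> G" "card P0 = d"
  shows "Delta BB (S \<union> P0) (S \<union> (G - P0)) = (2 * d - 1) choose d"
proof -
  let ?h = "\<lambda>P. {#S \<union> P, S \<union> (G - P)#}"
  let ?half = "{P. P \<subseteq> G \<and> card P = d}"
  have card_SP: "card (S \<union> P) = card S + card P" if "P \<subseteq> G" for P
    using card_Un_disjoint[OF S finite_subset[OF that G(1)]] SG that by blast
  have card_basis: "card D = card S + d" if "D \<in> BB" for D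
    using matroid_bases_card_eq[OF M that bases[OF P0]] card_SP[OF P0(1)] P0(2) by simp
  let ?pairs = "{{#D1, D2#} | D1 D2. D1 \<in> BB \<and> D2 \<in> BB \<and>
      mset_set D1 + mset_set D2 = mset_set (S \<union> P0) + mset_set (S \<union> (G - P0))}"
  have "?pairs \<subseteq> ?h ` ?half"
  proof
    fix m assume "m \<in> ?pairs"
    then obtain D1 D2 where D: "m = {#D1, D2#}" "D1 \<in> BB" "D2 \<in> BB"
      "mset_set D1 + mset_set D2 = mset_set S + mset_set S + mset_set G"
      using mset_set_Un_complement[OF S G(1) SG P0(1)] by auto
    define P where "P = D1 \<inter> G"
    have fin: "finite D1" "finite D2"
      using matroid_basis_finite[OF M] D(2,3) by auto
    have D1: "D1 = S \<union> P" and D2: "D2 = S \<union> (G - P)"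
      using mset_set_sum_eq_Un_complement[OF S G(1) SG fin D(4)] unfolding P_def by auto
    have "P \<subseteq> G" unfolding P_def by blast
    moreover have "card P = d"
      using card_basis[OF D(2)] card_SP[OF calculation] D1 by simp
    ultimately show "m \<in> ?h ` ?half"
      using D(1) D1 D2 by blast
  qed
  moreover have "?h ` ?half \<subseteq> ?pairs"
  proof
    fix m assume "m \<in> ?h ` ?half"
    then obtain P where P: "P \<subseteq> G" "card P = d" and m: "m = ?h P" by blast
    have "S \<union> P \<in> BB" "S \<union> (G - P) \<in> BB"
      using bases P card_complement_half[OF G P] by auto
    moreover have "mset_set (S \<union> P) + mset_set (S \<union> (G - P)) =
        mset_set (S \<union> P0) + mset_set (S \<union> (G - P0))"
      using mset_set_Un_complement[OF S G(1) SG] P(1) P0(1) by simp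
    ultimately show "m \<in> ?pairs" using m by blast
  qed
  ultimately show ?thesis
    unfolding Delta_def using card_complement_pairs[OF G d SG] by (simp add: subset_antisym)
qed

theorem proposition3p3:
  fixes E :: "'a set" and BB :: "'a set set" and d :: nat
  assumes "matroid E BB"
    and "d \<ge> 2"
    and "\<exists>A C. A \<subseteq> E \<and> C \<subseteq> E \<and> A \<inter> C = {} \<and>
           matroid_iso (E - A - C) (minor_bases E BB A C) {0..<2*d} (uniform_bases d (2*d))"
  shows "\<exists>B1\<in>BB. \<exists>B2\<in>BB. Delta BB B1 B2 = (2*d - 1) choose d"
proof -
  obtain A C where AC: "A \<subseteq> E" "C \<subseteq> E"
    and iso: "matroid_iso (E - A - C) (minor_bases E BB A C) {0..<2*d} (uniform_bases d (2*d))"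
    using assms(3) by blast
  define G where "G = E - A - C"
  have card_G: "card G = 2 * d"
    and minor: "\<And>P. P \<subseteq> G \<Longrightarrow> P \<in> minor_bases E BB A C \<longleftrightarrow> card P = d"
    using matroid_iso_uniform_bases[OF iso] unfolding G_def by blast+
  obtain S where S: "S \<subseteq> E" "S \<inter> G = {}"
    and lift: "\<And>P. P \<in> minor_bases E BB A C \<Longrightarrow> S \<union> P \<in> BB"
    using minor_bases_lift[OF assms(1) AC, folded G_def] by blast
  have fin: "finite S" "finite G"
    using matroid_finite[OF assms(1)] S(1) finite_subset unfolding G_def by auto
  have bases: "S \<union> P \<in> BB" if "P \<subseteq> G" "card P = d" for P
    using lift minor[OF that(1)] that(2) by blast
  have "d \<le> card G" using card_G by simp
  then obtain P0 where P0: "P0 \<subseteq> G" "card P0 = d"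
    using obtain_subset_with_card_n by blast
  have "S \<union> P0 \<in> BB" "S \<union> (G - P0) \<in> BB"
    using bases P0 card_complement_half[OF fin(2) card_G P0] by auto
  moreover have "Delta BB (S \<union> P0) (S \<union> (G - P0)) = (2 * d - 1) choose d"
    using Delta_Un_complement[OF assms(1) fin card_G _ S(2) bases P0] assms(2) by linarith
  ultimately show ?thesis by blast
qed

end
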